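(* There is a constant $C>0$ such that for all $n\ge 2$ and $k\ge1$: if $\mathbf M\in\mathrm{GL}(n,2)$ equals a product $\mathbf M_{\mathcal T_k}\cdots\mathbf M_{\mathcal T_1}$ of $k$ CNOT-tree matrices, each on $n$ qubits, then $\mathbf M$ is a product of at most $Ck\log^2 n$ parallel row-elimination matrices. That is, the circuit can be parallelized to depth $O(k\log^2 n)$ without ancillae.
   Context: $\mathsf R(i,j)=\mathbf I+\mathbf 1_{j,i}$ over $\mathbb F_2$, where $\mathbf 1_{j,i}$ is the matrix with a single $1$ in entry $(j,i)$. A parallel row-elimination matrix is $\mathbf I$ or $\mathbf I+\sum_{k=1}^t\mathbf 1_{j_k,i_k}$, where the $2t$ indices $i_k,j_k$ are pairwise distinct. A CNOT-tree matrix $\mathbf M_{\mathcal T}$ is defined for a proper binary tree $\mathcal T$ with $n$ leaves carrying distinct labels from $[n]$ and internal nodes labeled $L$ or $R$. Each node $v$ receives a qubit index $i(v)$, and each internal node $v$ a matrix $\mathbf M_v$, as follows. Write $c_L,c_R$ for the left and right children of $v$. - If $v$ is a leaf, $i(v)$ is its label. - If $v$ is internal with label $L$, then $i(v)=i(c_L)$ and $\mathbf M_v=\mathsf R(i(c_R),i(c_L))$. - If $v$ is internal with label $R$, then $i(v)=i(c_R)$ and $\mathbf M_v=\mathsf R(i(c_L),i(c_R))$. Then $\mathbf M_{\mathcal T}=\mathbf M_{v_{n-1}}\cdots\mathbf M_{v_1}$, where $v_1,\dots,v_{n-1}$ are the internal nodes in postorder. *)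

theory Defs
  imports "Jordan_Normal_Form.Matrix" "HOL-Library.Z2"
begin

text \<open>Matrices over F2 = type bit, of dimension n x n (Jordan_Normal_Form matrices).
  Qubits are indexed 0..n-1 (the paper's [n] shifted by one).\<close>

definition E1 :: "nat \<Rightarrow> nat \<Rightarrow> nat \<Rightarrow> bit mat" where
  "E1 n j i = mat n n (\<lambda>(a,b). if a = j \<and> b = i then 1 else 0)"

definition Rmat :: "nat \<Rightarrow> nat \<Rightarrow> nat \<Rightarrow> bit mat" where
  "Rmat n i j = 1\<^sub>m n + E1 n j i"

definition par_elim :: "nat \<Rightarrow> bit mat \<Rightarrow> bool" where
  "par_elim n P \<longleftrightarrow> (\<exists>ps :: (nat \<times> nat) list.
      distinct (concat (map (\<lambda>(i,j). [i,j]) ps)) \<and>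
      (\<forall>(i,j)\<in>set ps. i < n \<and> j < n) \<and>
      P = foldr (\<lambda>(i,j) A. A + E1 n j i) ps (1\<^sub>m n))"

datatype lab = L | R

datatype ctree = Leaf nat | Node lab ctree ctree

fun leaves :: "ctree \<Rightarrow> nat list" where
  "leaves (Leaf a) = [a]"
| "leaves (Node d l r) = leaves l @ leaves r"

fun qidx :: "ctree \<Rightarrow> nat" where
  "qidx (Leaf a) = a"
| "qidx (Node L l r) = qidx l"
| "qidx (Node R l r) = qidx r"

fun node_mats :: "nat \<Rightarrow> ctree \<Rightarrow> bit mat list" where
  "node_mats n (Leaf a) = []"
| "node_mats n (Node L l r) = node_mats n l @ node_mats n r @ [Rmat n (qidx r) (qidx l)]"
| "node_mats n (Node R l r) = node_mats n l @ node_mats n r @ [Rmat n (qidx l) (qidx r)]"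

definition mat_prod :: "nat \<Rightarrow> bit mat list \<Rightarrow> bit mat" where
  "mat_prod n Ms = foldr (*) Ms (1\<^sub>m n)"

text \<open>M_T = M_{v_{n-1}} ... M_{v_1} with v_1,...,v_{n-1} the postorder.\<close>
definition tree_mat :: "nat \<Rightarrow> ctree \<Rightarrow> bit mat" where
  "tree_mat n T = mat_prod n (rev (node_mats n T))"

definition cnot_tree :: "nat \<Rightarrow> ctree \<Rightarrow> bool" where
  "cnot_tree n T \<longleftrightarrow> length (leaves T) = n \<and> distinct (leaves T) \<and> set (leaves T) \<subseteq> {..<n}"

end

theory Submission
  imports Defs "HOL-Library.Log_Nat" "HOL-Library.Multiset"
begin

text \<open>The matrix of a CNOT tree is that of a circuit with one CNOT per internal node. Decompose
  the tree along its heavy path, which always descends into the child with more leaves. The gates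
  at the nodes of this spine fall into groups: a leader qubit collects some light children's
  qubits and is then added onto the next leader. Up to commutations, the spine is therefore a set
  of fan-ins on disjoint qubits followed by a chain of CNOTs through the leaders, and both can be
  done in logarithmic depth (fan-in by a binary tree, the chain as a Brent--Kung prefix sum). The
  light subtrees act on disjoint qubits and have at most half the leaves each, so they are
  handled recursively and in parallel before the spine, for a total depth of \<open>O(log\<^sup>2 n)\<close>
  per tree. Every layer of the resulting circuit acts on disjoint qubit pairs, so its matrix is a
  parallel row-elimination matrix.\<close>

section \<open>CNOT circuits\<close>

text \<open>The gate \<open>(i, j)\<close> adds qubit \<open>i\<close> onto qubit \<open>j\<close>; on \<open>n\<close> qubits its matrix is
  \<open>Rmat n i j\<close>.\<close>

type_synonym gate = "nat \<times> nat"

definition cnot :: "gate \<Rightarrow> (nat \<Rightarrow> 'a::ab_group_add) \<Rightarrow> nat \<Rightarrow> 'a" where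
  "cnot g s = (case g of (i, j) \<Rightarrow> s(j := s j + s i))"

definition run :: "gate list \<Rightarrow> (nat \<Rightarrow> 'a::ab_group_add) \<Rightarrow> nat \<Rightarrow> 'a" where
  "run G = fold cnot G"

lemma run_Nil [simp]: "run [] s = s"
  and run_Cons [simp]: "run (g # G) s = run G (cnot g s)"
  and run_append [simp]: "run (G @ H) s = run H (run G s)"
  by (simp_all add: run_def)

definition wires :: "gate list \<Rightarrow> nat list" where
  "wires G = concat (map (\<lambda>(i, j). [i, j]) G)"

lemma wires_Nil [simp]: "wires [] = []"
  and wires_Cons [simp]: "wires ((i, j) # G) = i # j # wires G"
  and wires_append [simp]: "wires (G @ H) = wires G @ wires H"
  by (simp_all add: wires_def)

lemma set_wires: "set (wires G) = (\<Union>(i, j)\<in>set G. {i, j})"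
  by (auto simp: wires_def)

lemma set_wires_concat: "set (wires (concat Gs)) = (\<Union>G\<in>set Gs. set (wires G))"
  by (induction Gs) auto

lemma wires_memberD: "(i, j) \<in> set G \<Longrightarrow> i \<in> set (wires G) \<and> j \<in> set (wires G)"
  by (auto simp: set_wires)

lemma run_not_target: "q \<notin> snd ` set G \<Longrightarrow> run G s q = s q"
  by (induction G arbitrary: s) (auto simp: cnot_def)

lemma run_idle: "q \<notin> set (wires G) \<Longrightarrow> run G s q = s q"
  by (rule run_not_target) (auto dest: wires_memberD)

lemma run_fun_upd_idle: "t \<notin> set (wires G) \<Longrightarrow> run G (s(t := v)) = (run G s)(t := v)"
proof (induction G arbitrary: s)
  case (Cons g G)
  obtain i j where g: "g = (i, j)" by fastforce
  with Cons.prems have "cnot g (s(t := v)) = (cnot g s)(t := v)"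
    by (auto simp: cnot_def fun_eq_iff)
  moreover have "t \<notin> set (wires G)"
    using Cons.prems g by simp
  ultimately show ?case
    using Cons.IH by (simp del: fun_upd_apply)
qed simp

lemma cnot_commute:
  "a \<noteq> d \<Longrightarrow> c \<noteq> b \<Longrightarrow> cnot (a, b) (cnot (c, d) s) = cnot (c, d) (cnot (a, b) s)"
  by (auto simp: cnot_def fun_eq_iff add_ac)

lemma run_commute_cnot:
  "\<forall>(c, d)\<in>set H. a \<noteq> d \<and> c \<noteq> b \<Longrightarrow> run H (cnot (a, b) s) = cnot (a, b) (run H s)"
proof (induction H arbitrary: s)
  case (Cons h H)
  obtain c d where h: "h = (c, d)" by fastforce
  with Cons.prems have "cnot (c, d) (cnot (a, b) s) = cnot (a, b) (cnot (c, d) s)"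
    by (simp add: cnot_commute)
  with Cons h show ?case by simp
qed simp

lemma run_commute:
  assumes "\<forall>(a, b)\<in>set G. \<forall>(c, d)\<in>set H. a \<noteq> d \<and> c \<noteq> b"
  shows "run H (run G s) = run G (run H s)"
  using assms
proof (induction G arbitrary: s)
  case (Cons g G)
  then show ?case by (cases g) (simp add: run_commute_cnot)
qed simp

lemma run_commute_disjoint:
  "set (wires G) \<inter> set (wires H) = {} \<Longrightarrow> run H (run G s) = run G (run H s)"
  by (rule run_commute) (blast dest: wires_memberD)

lemma run_layer:
  assumes "distinct (wires K)"
  shows "run K s q = s q + (\<Sum>(i, j)\<leftarrow>K. if j = q then s i else 0)"
  using assms
proof (induction K arbitrary: s)
  case (Cons g K)
  obtain i j where g: "g = (i, j)" by fastforce
  with Cons.prems have controls: "\<forall>(i', j')\<in>set K. i' \<noteq> j" and "distinct (wires K)"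
    by (auto simp: set_wires)
  then have "run K (cnot g s) q
      = cnot g s q + (\<Sum>(i', j')\<leftarrow>K. if j' = q then cnot g s i' else 0)"
    using Cons.IH by blast
  also have "(\<Sum>(i', j')\<leftarrow>K. if j' = q then cnot g s i' else 0)
      = (\<Sum>(i', j')\<leftarrow>K. if j' = q then s i' else 0)"
    using controls by (intro arg_cong[where f = sum_list] map_cong) (auto simp: g cnot_def)
  also have "cnot g s q = s q + (if j = q then s i else 0)"
    by (simp add: g cnot_def)
  finally show ?case
    by (simp add: g add.assoc)
qed simp

lemma distinct_wires_not_target:
  "distinct (wires K) \<Longrightarrow> (i, j) \<in> set K \<Longrightarrow> i \<notin> snd ` set K"
proof (induction K)
  case (Cons g K)
  obtain a b where g: "g = (a, b)" by fastforce
  have ab: "a \<noteq> b" "a \<notin> set (wires K)" "b \<notin> set (wires K)" and "distinct (wires K)"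
    using Cons.prems(1) g by auto
  show ?case
  proof (cases "(i, j) = g")
    case True
    then show ?thesis using ab g by (force dest: wires_memberD)
  next
    case False
    then have "(i, j) \<in> set K" using Cons.prems(2) by simp
    then show ?thesis using Cons.IH \<open>distinct (wires K)\<close> ab g by (force dest: wires_memberD)
  qed
qed simp

lemma run_layer_involutive:
  fixes s :: "nat \<Rightarrow> 'a::ab_group_add"
  assumes "distinct (wires K)" and char2: "\<And>x::'a. x + x = 0"
  shows "run K (run K s) = s"
proof
  fix q
  have "run K s i = s i" if "(i, j) \<in> set K" for i j
    using assms(1) that by (blast intro: run_not_target dest: distinct_wires_not_target)
  then have "(\<Sum>(i, j)\<leftarrow>K. if j = q then run K s i else 0) = (\<Sum>(i, j)\<leftarrow>K. if j = q then s i else 0)"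
    by (intro arg_cong[where f = sum_list] map_cong) auto
  then show "run K (run K s) q = s q"
    by (simp add: run_layer[OF assms(1)] add.assoc char2)
qed

section \<open>Logarithmic-depth fan-in and prefix sums\<close>

definition pair_layer :: "(nat \<Rightarrow> nat) \<Rightarrow> (nat \<Rightarrow> nat) \<Rightarrow> nat \<Rightarrow> gate list" where
  "pair_layer u v k = map (\<lambda>j. (u j, v j)) [0..<k]"

lemma set_wires_pair_layer: "set (wires (pair_layer u v k)) = u ` {..<k} \<union> v ` {..<k}"
  by (auto simp: pair_layer_def set_wires)

lemma targets_pair_layer: "snd ` set (pair_layer u v k) = v ` {..<k}"
  by (force simp: pair_layer_def)

lemma distinct_wires_pair_layer:
  assumes "inj_on u {..<k}" "inj_on v {..<k}" "\<forall>j<k. \<forall>j'<k. u j \<noteq> v j'"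
  shows "distinct (wires (pair_layer u v k))"
  using assms
proof (induction k)
  case (Suc k)
  have "inj_on u {..<k}" "inj_on v {..<k}"
    using Suc.prems(1,2) by (auto intro: inj_on_subset)
  then have "distinct (wires (pair_layer u v k))"
    using Suc by simp
  moreover have "u k \<notin> u ` {..<k}" "v k \<notin> v ` {..<k}"
    using Suc.prems(1,2) by (simp_all add: inj_on_image_mem_iff)
  moreover have "u k \<noteq> v j" "v k \<noteq> u j" if "j \<le> k" for j
    using Suc.prems(3) that by (metis le_imp_less_Suc lessI)+
  then have "u k \<notin> v ` {..<k}" "v k \<notin> u ` {..<k}" "u k \<noteq> v k"
    by (blast dest: less_imp_le)+
  ultimately show ?case
    by (auto simp: pair_layer_def set_wires_pair_layer[unfolded pair_layer_def])
qed (simp add: pair_layer_def)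

lemma run_pair_layer_target:
  assumes "distinct (wires (pair_layer u v k))" "inj_on v {..<k}" "j < k"
  shows "run (pair_layer u v k) s (v j) = s (v j) + s (u j)"
proof -
  have "(\<Sum>(a, b)\<leftarrow>pair_layer u v k. if b = v j then s a else 0)
      = (\<Sum>i<k. if v i = v j then s (u i) else 0)"
    by (simp add: pair_layer_def sum_set_upt_conv_sum_list_nat[symmetric] atLeast0LessThan)
  also have "\<dots> = (\<Sum>i<k. if i = j then s (u i) else 0)"
    using assms(2,3) by (intro sum.cong) (auto simp: inj_on_def)
  also have "\<dots> = s (u j)"
    using assms(3) by simp
  finally show ?thesis
    by (simp add: run_layer[OF assms(1)])
qed

lemma run_pair_layer_idle: "q \<notin> v ` {..<k} \<Longrightarrow> run (pair_layer u v k) s q = s q"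
  by (simp add: run_not_target targets_pair_layer)

lemma sum_lessThan_double:
  "(\<Sum>k<2 * q. g k) = (\<Sum>j<q. g (2 * j) + g (2 * j + 1))"
  for g :: "nat \<Rightarrow> 'a::comm_monoid_add"
  by (induction q) (auto simp: add.assoc)

lemma sum_lessThan_pairs:
  "(\<Sum>k<m. g k) = (\<Sum>j<(m + 1) div 2. g (2 * j) + (if 2 * j + 1 < m then g (2 * j + 1) else 0))"
  for g :: "nat \<Rightarrow> 'a::comm_monoid_add"
proof (cases "even m")
  case True
  then obtain q where "m = 2 * q" by blast
  then show ?thesis by (simp add: sum_lessThan_double)
next
  case False
  then obtain q where "m = 2 * q + 1" by (blast elim: oddE)
  then show ?thesis by (simp add: sum_lessThan_double)
qed

lemma sum_evens_run_pair_layer: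
  assumes "inj_on f {..<m}"
  shows "(\<Sum>j<(m + 1) div 2. run (pair_layer (\<lambda>j. f (2 * j + 1)) (\<lambda>j. f (2 * j)) (m div 2)) s (f (2 * j)))
    = (\<Sum>k<m. s (f k))"
proof -
  let ?K = "pair_layer (\<lambda>j. f (2 * j + 1)) (\<lambda>j. f (2 * j)) (m div 2)"
  have inj: "f a = f b \<longleftrightarrow> a = b" if "a < m" "b < m" for a b
    using assms that by (auto simp: inj_on_def)
  have dK: "distinct (wires ?K)"
    by (rule distinct_wires_pair_layer) (auto simp: inj_on_def inj, presburger)
  have evens: "inj_on (\<lambda>j. f (2 * j)) {..<m div 2}"
    by (auto simp: inj_on_def inj)
  have "run ?K s (f (2 * j)) = s (f (2 * j)) + (if 2 * j + 1 < m then s (f (2 * j + 1)) else 0)"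
    if "j < (m + 1) div 2" for j
  proof (cases "2 * j + 1 < m")
    case True
    then have "j < m div 2"
      by linarith
    with True show ?thesis
      using run_pair_layer_target[OF dK evens] by simp
  next
    case False
    with that have "f (2 * j) \<notin> (\<lambda>j. f (2 * j)) ` {..<m div 2}"
      by (auto simp: inj)
    with False show ?thesis
      by (simp add: run_pair_layer_idle)
  qed
  then show ?thesis
    by (simp add: sum_lessThan_pairs[of "\<lambda>k. s (f k)"])
qed

text \<open>Fan-in in logarithmic depth: add the odd-indexed qubits onto the even-indexed ones,
  recurse on the even-indexed qubits, and undo the first layer (which requires characteristic 2).\<close>

function fan_in_circuit :: "nat \<Rightarrow> (nat \<Rightarrow> nat) \<Rightarrow> nat \<Rightarrow> gate list list" where
  "fan_in_circuit t f m =
    (if m = 0 then [] else if m = 1 then [[(f 0, t)]] else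
       [pair_layer (\<lambda>j. f (2 * j + 1)) (\<lambda>j. f (2 * j)) (m div 2)]
       @ fan_in_circuit t (\<lambda>j. f (2 * j)) ((m + 1) div 2)
       @ [pair_layer (\<lambda>j. f (2 * j + 1)) (\<lambda>j. f (2 * j)) (m div 2)])"
  by pat_completeness auto
termination by (relation "measure (\<lambda>(t, f, m). m)") auto

declare fan_in_circuit.simps [simp del]

lemma run_fan_in_circuit:
  fixes s :: "nat \<Rightarrow> 'a::ab_group_add"
  assumes char2: "\<And>x::'a. x + x = 0"
    and "inj_on f {..<m}" "t \<notin> f ` {..<m}"
  shows "run (concat (fan_in_circuit t f m)) s = s(t := s t + (\<Sum>k<m. s (f k)))"
  using assms(2,3)
proof (induction t f m arbitrary: s rule: fan_in_circuit.induct)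
  case (1 t f m)
  consider "m = 0" | "m = 1" | "m \<ge> 2" by linarith
  then show ?case
  proof cases
    case 1
    then show ?thesis by (simp add: fan_in_circuit.simps)
  next
    case 2
    with "1.prems" have "t \<noteq> f 0" by auto
    with 2 show ?thesis by (simp add: fan_in_circuit.simps cnot_def fun_eq_iff add.commute)
  next
    case 3
    define K where "K = pair_layer (\<lambda>j. f (2 * j + 1)) (\<lambda>j. f (2 * j)) (m div 2)"
    define s' where "s' = run K s"
    have inj: "f a = f b \<longleftrightarrow> a = b" if "a < m" "b < m" for a b
      using "1.prems"(1) that by (auto simp: inj_on_def)
    have dK: "distinct (wires K)"
      unfolding K_def by (rule distinct_wires_pair_layer) (auto simp: inj_on_def inj, presburger)
    have evens: "inj_on (\<lambda>j. f (2 * j)) {..<(m + 1) div 2}"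
      by (auto simp: inj_on_def inj)
    have "t \<notin> (\<lambda>j. f (2 * j)) ` {..<(m + 1) div 2}"
      using "1.prems"(2) by auto
    then have IH: "run (concat (fan_in_circuit t (\<lambda>j. f (2 * j)) ((m + 1) div 2))) s'
        = s'(t := s' t + (\<Sum>j<(m + 1) div 2. s' (f (2 * j))))"
      using "1.IH" 3 evens by (simp add: fun_upd_def)
    have "t \<notin> set (wires K)"
      using "1.prems"(2) by (auto simp: K_def set_wires_pair_layer)
    then have "s' t = s t"
      by (simp add: s'_def run_idle)
    moreover have "(\<Sum>j<(m + 1) div 2. s' (f (2 * j))) = (\<Sum>k<m. s (f k))"
      unfolding s'_def K_def by (rule sum_evens_run_pair_layer[OF "1.prems"(1)])
    moreover have "fan_in_circuit t f m = [K] @ fan_in_circuit t (\<lambda>j. f (2 * j)) ((m + 1) div 2) @ [K]"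
      using 3 by (simp add: fan_in_circuit.simps K_def)
    ultimately have "run (concat (fan_in_circuit t f m)) s = run K (s'(t := s t + (\<Sum>k<m. s (f k))))"
      using IH by (simp add: s'_def[symmetric])
    also have "\<dots> = (run K s')(t := s t + (\<Sum>k<m. s (f k)))"
      by (rule run_fun_upd_idle) fact
    also have "run K s' = s"
      unfolding s'_def by (rule run_layer_involutive[OF dK char2])
    finally show ?thesis .
  qed
qed

definition layered :: "gate list list \<Rightarrow> bool" where
  "layered C \<longleftrightarrow> (\<forall>K\<in>set C. distinct (wires K))"

lemma layered_Nil [simp]: "layered []"
  and layered_Cons [simp]: "layered (K # C) \<longleftrightarrow> distinct (wires K) \<and> layered C"
  and layered_append [simp]: "layered (C @ D) \<longleftrightarrow> layered C \<and> layered D"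
  by (auto simp: layered_def)

lemma fan_in_circuit_layered: "inj_on f {..<m} \<Longrightarrow> t \<notin> f ` {..<m} \<Longrightarrow> layered (fan_in_circuit t f m)"
proof (induction t f m rule: fan_in_circuit.induct)
  case (1 t f m)
  have inj: "f a = f b \<longleftrightarrow> a = b" if "a < m" "b < m" for a b
    using "1.prems"(1) that by (auto simp: inj_on_def)
  have "distinct (wires (pair_layer (\<lambda>j. f (2 * j + 1)) (\<lambda>j. f (2 * j)) (m div 2)))"
    by (rule distinct_wires_pair_layer) (auto simp: inj_on_def inj, presburger)
  moreover have "inj_on (\<lambda>j. f (2 * j)) {..<(m + 1) div 2}"
    by (auto simp: inj_on_def inj)
  moreover have "t \<notin> (\<lambda>j. f (2 * j)) ` {..<(m + 1) div 2}"
    using "1.prems"(2) by auto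
  ultimately show ?case
    using "1.IH" "1.prems"(2) by (subst fan_in_circuit.simps) auto
qed

lemma wires_fan_in_circuit: "set (wires (concat (fan_in_circuit t f m))) \<subseteq> insert t (f ` {..<m})"
proof (induction t f m rule: fan_in_circuit.induct)
  case (1 t f m)
  have "(\<lambda>j. f (2 * j)) ` {..<(m + 1) div 2} \<subseteq> f ` {..<m}"
    by auto
  then show ?case
    using "1.IH" by (subst fan_in_circuit.simps) (auto simp: set_wires_pair_layer)
qed

lemma length_fan_in_circuit: "length (fan_in_circuit t f m) \<le> 2 * ceillog2 m + 1"
proof (induction t f m rule: fan_in_circuit.induct)
  case (1 t f m)
  then show ?case
    by (subst fan_in_circuit.simps) (auto simp: ceillog2_rec[of m])
qed

text \<open>Prefix sums in logarithmic depth (Brent--Kung): add each even-indexed qubit onto its odd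
  successor, recurse on the odd-indexed qubits, and finally add each odd-indexed qubit onto its
  even successor.\<close>

function prefix_circuit :: "(nat \<Rightarrow> nat) \<Rightarrow> nat \<Rightarrow> gate list list" where
  "prefix_circuit f m =
    (if m \<le> 1 then [] else
       [pair_layer (\<lambda>j. f (2 * j)) (\<lambda>j. f (2 * j + 1)) (m div 2)]
       @ prefix_circuit (\<lambda>j. f (2 * j + 1)) (m div 2)
       @ [pair_layer (\<lambda>j. f (2 * j + 1)) (\<lambda>j. f (2 * j + 2)) ((m - 1) div 2)])"
  by pat_completeness auto
termination by (relation "measure (\<lambda>(f, m). m)") auto

declare prefix_circuit.simps [simp del]

lemma prefix_circuit_layered: "inj_on f {..<m} \<Longrightarrow> layered (prefix_circuit f m)"
proof (induction f m rule: prefix_circuit.induct)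
  case (1 f m)
  have inj: "f a = f b \<longleftrightarrow> a = b" if "a < m" "b < m" for a b
    using "1.prems" that by (auto simp: inj_on_def)
  have "distinct (wires (pair_layer (\<lambda>j. f (2 * j)) (\<lambda>j. f (2 * j + 1)) (m div 2)))"
    by (rule distinct_wires_pair_layer) (auto simp: inj_on_def inj, presburger)
  moreover have "distinct (wires (pair_layer (\<lambda>j. f (2 * j + 1)) (\<lambda>j. f (2 * j + 2)) ((m - 1) div 2)))"
    by (rule distinct_wires_pair_layer) (auto simp: inj_on_def inj, presburger)
  moreover have "inj_on (\<lambda>j. f (2 * j + 1)) {..<m div 2}"
    by (auto simp: inj_on_def inj)
  ultimately show ?case
    using "1.IH" by (subst prefix_circuit.simps) auto
qed

lemma wires_prefix_circuit: "set (wires (concat (prefix_circuit f m))) \<subseteq> f ` {..<m}"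
proof (induction f m rule: prefix_circuit.induct)
  case (1 f m)
  have "(\<lambda>j. f (2 * j + 1)) ` {..<m div 2} \<subseteq> f ` {..<m}"
    by auto
  then show ?case
    using "1.IH" by (subst prefix_circuit.simps) (auto simp: set_wires_pair_layer)
qed

lemma length_prefix_circuit: "length (prefix_circuit f m) \<le> 2 * ceillog2 m"
proof (induction f m rule: prefix_circuit.induct)
  case (1 f m)
  have "ceillog2 (m div 2) \<le> ceillog2 ((m + 1) div 2)"
    by (rule ceillog2_mono) simp
  with 1 show ?case
    by (subst prefix_circuit.simps) (auto simp: ceillog2_rec[of m])
qed

definition is_prefix_sums :: "(nat \<Rightarrow> nat) \<Rightarrow> nat \<Rightarrow> (nat \<Rightarrow> 'a::comm_monoid_add) \<Rightarrow> (nat \<Rightarrow> 'a) \<Rightarrow> bool" where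
  "is_prefix_sums f m s s' \<longleftrightarrow>
     (\<forall>i<m. s' (f i) = (\<Sum>k\<le>i. s (f k))) \<and> (\<forall>q. q \<notin> f ` {..<m} \<longrightarrow> s' q = s q)"

lemma is_prefix_sums_unique:
  assumes "is_prefix_sums f m s s'" "is_prefix_sums f m s s''"
  shows "s' = s''"
proof
  fix q
  show "s' q = s'' q"
    using assms unfolding is_prefix_sums_def by (cases "q \<in> f ` {..<m}") auto
qed

lemma odd_index_image_iff:
  fixes f :: "nat \<Rightarrow> 'a"
  assumes "inj_on f {..<m}" "a < m"
  shows "f a \<in> (\<lambda>j. f (2 * j + 1)) ` {..<m div 2} \<longleftrightarrow> odd a"
proof
  assume "f a \<in> (\<lambda>j. f (2 * j + 1)) ` {..<m div 2}"
  then obtain j where j: "j < m div 2" "f a = f (2 * j + 1)"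
    by auto
  have "a = 2 * j + 1"
    by (rule inj_onD[OF assms(1) j(2)]) (use assms(2) j(1) in auto)
  then show "odd a"
    by simp
next
  assume "odd a"
  then obtain j where "a = 2 * j + 1"
    by (blast elim: oddE)
  with assms(2) show "f a \<in> (\<lambda>j. f (2 * j + 1)) ` {..<m div 2}"
    by auto
qed

lemma even_index_image_iff:
  fixes f :: "nat \<Rightarrow> 'a"
  assumes "inj_on f {..<m}" "a < m"
  shows "f a \<in> (\<lambda>j. f (2 * j + 2)) ` {..<(m - 1) div 2} \<longleftrightarrow> even a \<and> a \<noteq> 0"
proof
  assume "f a \<in> (\<lambda>j. f (2 * j + 2)) ` {..<(m - 1) div 2}"
  then obtain j where j: "j < (m - 1) div 2" "f a = f (2 * j + 2)"
    by auto
  have "a = 2 * j + 2"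
    by (rule inj_onD[OF assms(1) j(2)]) (use assms(2) j(1) in auto)
  then show "even a \<and> a \<noteq> 0"
    by simp
next
  assume "even a \<and> a \<noteq> 0"
  then have "\<exists>j. a = 2 * j + 2"
    by presburger
  then obtain j where "a = 2 * j + 2"
    by blast
  with assms(2) show "f a \<in> (\<lambda>j. f (2 * j + 2)) ` {..<(m - 1) div 2}"
    by auto
qed

lemma prefix_sums_odd_half:
  fixes s :: "nat \<Rightarrow> 'a::ab_group_add"
  assumes "inj_on f {..<m}"
    and IH: "is_prefix_sums (\<lambda>j. f (2 * j + 1)) (m div 2)
      (run (pair_layer (\<lambda>j. f (2 * j)) (\<lambda>j. f (2 * j + 1)) (m div 2)) s) s'"
  shows "j < m div 2 \<Longrightarrow> s' (f (2 * j + 1)) = (\<Sum>i\<le>2 * j + 1. s (f i))"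
    and "q \<notin> (\<lambda>j. f (2 * j + 1)) ` {..<m div 2} \<Longrightarrow> s' q = s q"
proof -
  let ?P = "pair_layer (\<lambda>j. f (2 * j)) (\<lambda>j. f (2 * j + 1)) (m div 2)"
  have inj: "f a = f b \<longleftrightarrow> a = b" if "a < m" "b < m" for a b
    using assms(1) that by (auto simp: inj_on_def)
  have dP: "distinct (wires ?P)"
    by (rule distinct_wires_pair_layer) (auto simp: inj_on_def inj, presburger)
  have odds: "inj_on (\<lambda>j. f (2 * j + 1)) {..<m div 2}"
    by (auto simp: inj_on_def inj)
  show "s' (f (2 * j + 1)) = (\<Sum>i\<le>2 * j + 1. s (f i))" if "j < m div 2"
  proof -
    have "s' (f (2 * j + 1)) = (\<Sum>i\<le>j. run ?P s (f (2 * i + 1)))"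
      using IH that by (simp add: is_prefix_sums_def)
    also have "\<dots> = (\<Sum>i<Suc j. s (f (2 * i)) + s (f (2 * i + 1)))"
    proof (unfold lessThan_Suc_atMost, rule sum.cong)
      fix i
      assume "i \<in> {..j}"
      with that have "i < m div 2"
        by simp
      then show "run ?P s (f (2 * i + 1)) = s (f (2 * i)) + s (f (2 * i + 1))"
        using run_pair_layer_target[OF dP odds] by (simp add: add.commute)
    qed simp
    also have "\<dots> = (\<Sum>i<Suc (2 * j + 1). s (f i))"
      using sum_lessThan_double[of "\<lambda>i. s (f i)" "Suc j"] by simp
    finally show ?thesis
      by (simp only: lessThan_Suc_atMost)
  qed
  show "s' q = s q" if "q \<notin> (\<lambda>j. f (2 * j + 1)) ` {..<m div 2}"
    using IH that by (simp add: is_prefix_sums_def run_pair_layer_idle)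
qed

lemma prefix_sums_even_half:
  fixes s :: "nat \<Rightarrow> 'a::ab_group_add"
  assumes "inj_on f {..<m}"
    and odd: "\<And>j. j < m div 2 \<Longrightarrow> s' (f (2 * j + 1)) = (\<Sum>i\<le>2 * j + 1. s (f i))"
    and idle: "\<And>q. q \<notin> (\<lambda>j. f (2 * j + 1)) ` {..<m div 2} \<Longrightarrow> s' q = s q"
  shows "is_prefix_sums f m s (run (pair_layer (\<lambda>j. f (2 * j + 1)) (\<lambda>j. f (2 * j + 2)) ((m - 1) div 2)) s')"
proof -
  let ?Q = "pair_layer (\<lambda>j. f (2 * j + 1)) (\<lambda>j. f (2 * j + 2)) ((m - 1) div 2)"
  have inj: "f a = f b \<longleftrightarrow> a = b" if "a < m" "b < m" for a b
    using assms(1) that by (auto simp: inj_on_def)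
  have dQ: "distinct (wires ?Q)"
    by (rule distinct_wires_pair_layer) (auto simp: inj_on_def inj, presburger)
  have evens: "inj_on (\<lambda>j. f (2 * j + 2)) {..<(m - 1) div 2}"
    by (auto simp: inj_on_def inj)
  have "run ?Q s' (f i) = (\<Sum>k\<le>i. s (f k))" if "i < m" for i
  proof -
    note odd_iff = odd_index_image_iff[OF assms(1) that]
      and even_iff = even_index_image_iff[OF assms(1) that]
    have "i = 0 \<or> (\<exists>j. i = 2 * j + 1) \<or> (\<exists>j. i = 2 * j + 2)"
      by presburger
    then consider "i = 0" | j where "i = 2 * j + 1" | j where "i = 2 * j + 2"
      by blast
    then show ?thesis
    proof cases
      case 1
      then show ?thesis
        using odd_iff even_iff idle by (simp add: run_pair_layer_idle)
    next
      case 2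
      then have "j < m div 2"
        using that by simp
      with 2 show ?thesis
        using even_iff odd by (simp add: run_pair_layer_idle)
    next
      case 3
      then have "j < (m - 1) div 2" "j < m div 2"
        using that by auto
      have "run ?Q s' (f i) = s' (f (2 * j + 2)) + s' (f (2 * j + 1))"
        using run_pair_layer_target[OF dQ evens \<open>j < (m - 1) div 2\<close>] 3 by simp
      also have "s' (f (2 * j + 2)) = s (f i)"
        using idle odd_iff 3 by simp
      also have "s' (f (2 * j + 1)) = (\<Sum>k\<le>2 * j + 1. s (f k))"
        by (rule odd) fact
      finally show ?thesis
        using 3 by (simp add: add.commute)
    qed
  qed
  moreover have "run ?Q s' q = s q" if "q \<notin> f ` {..<m}" for q
  proof -
    have "q \<notin> (\<lambda>j. f (2 * j + 1)) ` {..<m div 2}" "q \<notin> (\<lambda>j. f (2 * j + 2)) ` {..<(m - 1) div 2}"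
      using that by auto
    then show ?thesis
      using idle by (simp add: run_pair_layer_idle)
  qed
  ultimately show ?thesis
    unfolding is_prefix_sums_def by blast
qed

lemma run_prefix_circuit:
  fixes s :: "nat \<Rightarrow> 'a::ab_group_add"
  assumes "inj_on f {..<m}"
  shows "is_prefix_sums f m s (run (concat (prefix_circuit f m)) s)"
  using assms
proof (induction f m arbitrary: s rule: prefix_circuit.induct)
  case (1 f m)
  show ?case
  proof (cases "m \<le> 1")
    case True
    then show ?thesis
      by (auto simp: prefix_circuit.simps is_prefix_sums_def le_Suc_eq)
  next
    case False
    let ?P = "pair_layer (\<lambda>j. f (2 * j)) (\<lambda>j. f (2 * j + 1)) (m div 2)"
    let ?Q = "pair_layer (\<lambda>j. f (2 * j + 1)) (\<lambda>j. f (2 * j + 2)) ((m - 1) div 2)"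
    define s' where "s' = run (concat (prefix_circuit (\<lambda>j. f (2 * j + 1)) (m div 2))) (run ?P s)"
    have "f a = f b \<longleftrightarrow> a = b" if "a < m" "b < m" for a b
      using "1.prems" that by (auto simp: inj_on_def)
    then have "inj_on (\<lambda>j. f (2 * j + 1)) {..<m div 2}"
      by (auto simp: inj_on_def)
    then have "is_prefix_sums (\<lambda>j. f (2 * j + 1)) (m div 2) (run ?P s) s'"
      unfolding s'_def by (rule "1.IH"[OF False])
    then have "is_prefix_sums f m s (run ?Q s')"
      by (intro prefix_sums_even_half[OF "1.prems"] prefix_sums_odd_half[OF "1.prems"])
    moreover have "run (concat (prefix_circuit f m)) s = run ?Q s'"
      using False by (subst prefix_circuit.simps) (simp add: s'_def)
    ultimately show ?thesis
      by simp
  qed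
qed

lemma image_nth_lessThan: "(!) xs ` {..<length xs} = set xs"
  by (auto simp: in_set_conv_nth)

fun chain_gates :: "nat list \<Rightarrow> gate list" where
  "chain_gates (a # b # qs) = (a, b) # chain_gates (b # qs)"
| "chain_gates _ = []"

lemma is_prefix_sums_Cons:
  fixes s :: "nat \<Rightarrow> 'a::ab_group_add"
  assumes "distinct (a # b # qs)"
    and IH: "is_prefix_sums ((!) (b # qs)) (length (b # qs)) (cnot (a, b) s) s'"
  shows "is_prefix_sums ((!) (a # b # qs)) (length (a # b # qs)) s s'"
proof -
  define s1 where "s1 = cnot (a, b) s"
  have IH_idle: "s' q = s1 q" if "q \<notin> set (b # qs)" for q
    using IH that unfolding is_prefix_sums_def image_nth_lessThan s1_def by blast
  have s1_b: "s1 b = s b + s a"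
    by (simp add: s1_def cnot_def)
  have s1_idle: "s1 q = s q" if "q \<noteq> b" for q
    using that by (simp add: s1_def cnot_def)
  have "s' ((a # b # qs) ! i) = (\<Sum>k\<le>i. s ((a # b # qs) ! k))" if "i < length (a # b # qs)" for i
  proof (cases i)
    case 0
    with assms(1) show ?thesis
      by (simp add: IH_idle s1_idle)
  next
    case (Suc j)
    then have "s' ((a # b # qs) ! i) = (\<Sum>k\<le>j. s1 ((b # qs) ! k))"
      using IH that by (simp add: is_prefix_sums_def s1_def)
    also have "\<dots> = (\<Sum>k\<le>j. s ((b # qs) ! k) + (if k = 0 then s a else 0))"
    proof (rule sum.cong)
      fix k
      assume "k \<in> {..j}"
      then have "k = 0 \<or> (b # qs) ! k \<noteq> b"
        using that Suc assms(1) by (cases k) (auto dest: nth_mem)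
      then show "s1 ((b # qs) ! k) = s ((b # qs) ! k) + (if k = 0 then s a else 0)"
        using s1_b s1_idle by auto
    qed simp
    also have "\<dots> = s a + (\<Sum>k\<le>j. s ((b # qs) ! k))"
      by (simp add: sum.distrib add.commute)
    also have "\<dots> = (\<Sum>k\<le>Suc j. s ((a # b # qs) ! k))"
      by (subst sum.atMost_Suc_shift) simp
    finally show ?thesis
      using Suc by simp
  qed
  moreover have "s' q = s q" if "q \<notin> (!) (a # b # qs) ` {..<length (a # b # qs)}" for q
    using that unfolding image_nth_lessThan by (simp add: IH_idle s1_idle)
  ultimately show ?thesis
    by (simp add: is_prefix_sums_def)
qed

lemma run_chain_gates:
  fixes s :: "nat \<Rightarrow> 'a::ab_group_add"
  assumes "distinct qs"
  shows "is_prefix_sums ((!) qs) (length qs) s (run (chain_gates qs) s)"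
  using assms
proof (induction qs arbitrary: s rule: chain_gates.induct)
  case (1 a b qs)
  then have "is_prefix_sums ((!) (b # qs)) (length (b # qs)) (cnot (a, b) s)
      (run (chain_gates (b # qs)) (cnot (a, b) s))"
    by simp
  with "1.prems" show ?case
    by (simp only: chain_gates.simps run_Cons is_prefix_sums_Cons)
qed (auto simp: is_prefix_sums_def)

lemma run_prefix_circuit_nth:
  "distinct qs \<Longrightarrow> run (concat (prefix_circuit ((!) qs) (length qs))) s = run (chain_gates qs) s"
  by (rule is_prefix_sums_unique[OF run_prefix_circuit run_chain_gates]) (auto intro: inj_on_nth)

definition fan_in_gates :: "nat \<Rightarrow> nat list \<Rightarrow> gate list" where
  "fan_in_gates t M = map (\<lambda>a. (a, t)) M"

lemma run_fan_in_gates: "t \<notin> set M \<Longrightarrow> run (fan_in_gates t M) s = s(t := s t + sum_list (map s M))"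
proof (induction M arbitrary: s)
  case (Cons a M)
  have "run (fan_in_gates t (a # M)) s = run (fan_in_gates t M) (cnot (a, t) s)"
    by (simp add: fan_in_gates_def)
  also have "\<dots> = (cnot (a, t) s)(t := cnot (a, t) s t + sum_list (map (cnot (a, t) s) M))"
    by (rule Cons.IH) (use Cons.prems in simp)
  also have "map (cnot (a, t) s) M = map s M"
    using Cons.prems by (auto simp: cnot_def)
  finally show ?case
    using Cons.prems by (auto simp: cnot_def fun_eq_iff add.assoc)
qed (simp add: fan_in_gates_def)

lemma run_fan_in_circuit_nth:
  fixes s :: "nat \<Rightarrow> 'a::ab_group_add"
  assumes "\<And>x::'a. x + x = 0" "distinct (t # M)"
  shows "run (concat (fan_in_circuit t ((!) M) (length M))) s = run (fan_in_gates t M) s"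
proof -
  have "inj_on ((!) M) {..<length M}" "t \<notin> (!) M ` {..<length M}"
    using assms(2) by (auto intro: inj_on_nth simp: image_nth_lessThan)
  moreover have "(\<Sum>k<length M. s (M ! k)) = sum_list (map s M)"
    by (simp add: sum_list_sum_nth atLeast0LessThan)
  ultimately show ?thesis
    using assms by (simp add: run_fan_in_circuit run_fan_in_gates)
qed

section \<open>Parallel composition of layered circuits\<close>

fun merge_layers :: "gate list list \<Rightarrow> gate list list \<Rightarrow> gate list list" where
  "merge_layers [] D = D"
| "merge_layers C [] = C"
| "merge_layers (G # C) (H # D) = (G @ H) # merge_layers C D"

lemma wires_merge_layers [simp]:
  "set (wires (concat (merge_layers C D))) = set (wires (concat C)) \<union> set (wires (concat D))"
  by (induction C D rule: merge_layers.induct) auto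

lemma length_merge_layers [simp]: "length (merge_layers C D) = max (length C) (length D)"
  by (induction C D rule: merge_layers.induct) auto

lemma run_merge_layers:
  fixes s :: "nat \<Rightarrow> 'a::ab_group_add"
  shows "set (wires (concat C)) \<inter> set (wires (concat D)) = {} \<Longrightarrow>
   run (concat (merge_layers C D)) s = run (concat D) (run (concat C) s)"
proof (induction C D arbitrary: s rule: merge_layers.induct)
  case (3 G C H D)
  then have disj: "set (wires (concat C)) \<inter> set (wires (concat D)) = {}"
    and disj': "set (wires H) \<inter> set (wires (concat C)) = {}"
    by auto
  have "run (concat (merge_layers (G # C) (H # D))) s
      = run (concat (merge_layers C D)) (run H (run G s))"
    by simp
  also have "\<dots> = run (concat D) (run (concat C) (run H (run G s)))"
    by (rule "3.IH"[OF disj])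
  also have "run (concat C) (run H (run G s)) = run H (run (concat C) (run G s))"
    by (rule run_commute_disjoint[OF disj'])
  finally show ?case
    by simp
qed simp_all

lemma merge_layers_layered:
  "layered C \<Longrightarrow> layered D \<Longrightarrow> set (wires (concat C)) \<inter> set (wires (concat D)) = {} \<Longrightarrow>
   layered (merge_layers C D)"
  by (induction C D rule: merge_layers.induct) auto

definition parallel :: "gate list list list \<Rightarrow> gate list list" where
  "parallel Cs = foldr merge_layers Cs []"

lemma parallel_Nil [simp]: "parallel [] = []"
  and parallel_Cons [simp]: "parallel (C # Cs) = merge_layers C (parallel Cs)"
  by (simp_all add: parallel_def)

lemma wires_parallel [simp]:
  "set (wires (concat (parallel Cs))) = (\<Union>C\<in>set Cs. set (wires (concat C)))"
  by (induction Cs) auto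

lemma length_parallel: "\<forall>C\<in>set Cs. length C \<le> b \<Longrightarrow> length (parallel Cs) \<le> b"
  by (induction Cs) auto

lemma run_parallel:
  "sorted_wrt disjnt (map (\<lambda>C. set (wires (concat C))) Cs) \<Longrightarrow>
   run (concat (parallel Cs)) s = run (concat (concat Cs)) s"
proof (induction Cs arbitrary: s)
  case (Cons C Cs)
  then have "set (wires (concat C)) \<inter> set (wires (concat (parallel Cs))) = {}"
    by (auto simp: disjnt_def)
  with Cons show ?case
    by (simp add: run_merge_layers)
qed simp

lemma parallel_layered:
  "sorted_wrt disjnt (map (\<lambda>C. set (wires (concat C))) Cs) \<Longrightarrow> \<forall>C\<in>set Cs. layered C \<Longrightarrow>
   layered (parallel Cs)"
proof (induction Cs)
  case (Cons C Cs)
  then have "set (wires (concat C)) \<inter> set (wires (concat (parallel Cs))) = {}"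
    by (auto simp: disjnt_def)
  with Cons show ?case
    by (simp add: merge_layers_layered)
qed simp

lemma sorted_wrt_disjnt_mono:
  "\<forall>x\<in>set xs. F x \<subseteq> G x \<Longrightarrow> sorted_wrt disjnt (map G xs) \<Longrightarrow> sorted_wrt disjnt (map F xs)"
  by (induction xs) (auto simp: disjnt_def, blast)

lemma sorted_wrt_disjnt_if_distinct_concat:
  "distinct (concat (map f xs)) \<Longrightarrow> sorted_wrt disjnt (map (\<lambda>x. set (f x)) xs)"
  by (induction xs) (auto simp: disjnt_def)

lemma run_concat_map_cong:
  fixes s :: "nat \<Rightarrow> 'a::ab_group_add"
  assumes "\<And>S u. S \<in> set Ss \<Longrightarrow> run (concat (f S)) u = run (g S) (u :: nat \<Rightarrow> 'a)"
  shows "run (concat (concat (map f Ss))) s = run (concat (map g Ss)) s"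
  using assms by (induction Ss arbitrary: s) simp_all

section \<open>Heavy-path decomposition of CNOT trees\<close>

definition nleaves :: "ctree \<Rightarrow> nat" where
  "nleaves T = length (leaves T)"

definition root_gate :: "lab \<Rightarrow> ctree \<Rightarrow> ctree \<Rightarrow> gate" where
  "root_gate d l r = (case d of L \<Rightarrow> (qidx r, qidx l) | R \<Rightarrow> (qidx l, qidx r))"

fun tree_gates :: "ctree \<Rightarrow> gate list" where
  "tree_gates (Leaf a) = []"
| "tree_gates (Node d l r) = tree_gates l @ tree_gates r @ [root_gate d l r]"

fun light_subtrees :: "ctree \<Rightarrow> ctree list" where
  "light_subtrees (Leaf a) = []"
| "light_subtrees (Node d l r) =
     (if nleaves r \<le> nleaves l then light_subtrees l @ [r] else light_subtrees r @ [l])"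

fun spine_leaf :: "ctree \<Rightarrow> nat" where
  "spine_leaf (Leaf a) = a"
| "spine_leaf (Node d l r) = (if nleaves r \<le> nleaves l then spine_leaf l else spine_leaf r)"

fun spine_gates :: "ctree \<Rightarrow> gate list" where
  "spine_gates (Leaf a) = []"
| "spine_gates (Node d l r) =
     (if nleaves r \<le> nleaves l then spine_gates l else spine_gates r) @ [root_gate d l r]"

lemma leaves_nonempty: "leaves T \<noteq> []"
  by (induction T) auto

lemma nleaves_pos: "nleaves T > 0"
  using leaves_nonempty[of T] by (simp add: nleaves_def)

lemma qidx_in_leaves: "qidx T \<in> set (leaves T)"
proof (induction T)
  case (Node d l r)
  then show ?case by (cases d) auto
qed simp

lemma wires_root_gate: "set (wires [root_gate d l r]) = {qidx l, qidx r}"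
  by (cases d) (auto simp: root_gate_def)

lemma wires_tree_gates: "set (wires (tree_gates T)) \<subseteq> set (leaves T)"
proof (induction T)
  case (Node d l r)
  then show ?case
    using wires_root_gate[of d l r] qidx_in_leaves[of l] qidx_in_leaves[of r] by auto
qed simp

lemma wires_spine_gates: "set (wires (spine_gates T)) \<subseteq> set (leaves T)"
proof (induction T)
  case (Node d l r)
  then show ?case
    using wires_root_gate[of d l r] qidx_in_leaves[of l] qidx_in_leaves[of r] by auto
qed simp

lemma mset_leaves_spine: "mset (leaves T) = mset (spine_leaf T # concat (map leaves (light_subtrees T)))"
  by (induction T) auto

lemma leaves_light_subtree: "S \<in> set (light_subtrees T) \<Longrightarrow> set (leaves S) \<subseteq> set (leaves T)"
  using mset_eq_setD[OF mset_leaves_spine[of T]] by auto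

lemma distinct_leaves_light_subtrees:
  "distinct (leaves T) \<Longrightarrow> distinct (spine_leaf T # concat (map leaves (light_subtrees T)))"
  using mset_eq_imp_distinct_iff[OF mset_leaves_spine[of T]] by simp

lemma nleaves_light_subtree: "S \<in> set (light_subtrees T) \<Longrightarrow> 2 * nleaves S \<le> nleaves T"
proof (induction T)
  case (Node d l r)
  then show ?case
    by (cases "nleaves r \<le> nleaves l") (auto simp: nleaves_def)
qed simp

lemma run_tree_gates_spine:
  assumes "distinct (leaves T)"
  shows "run (tree_gates T) s = run (spine_gates T) (run (concat (map tree_gates (light_subtrees T))) s)"
  using assms
proof (induction T arbitrary: s)
  case (Node d l r)
  then have disj: "set (leaves l) \<inter> set (leaves r) = {}" and "distinct (leaves l)" "distinct (leaves r)"
    by auto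
  show ?case
  proof (cases "nleaves r \<le> nleaves l")
    case True
    have "set (wires (spine_gates l)) \<inter> set (wires (tree_gates r)) = {}"
      using wires_spine_gates[of l] wires_tree_gates[of r] disj by blast
    with True Node.IH(1)[OF \<open>distinct (leaves l)\<close>] show ?thesis
      by (simp add: run_commute_disjoint)
  next
    case False
    have "set (wires (concat (map tree_gates (light_subtrees r)))) \<subseteq> set (leaves r)"
      using wires_tree_gates leaves_light_subtree by (fastforce simp: set_wires_concat)
    then have "set (wires (tree_gates l)) \<inter> set (wires (concat (map tree_gates (light_subtrees r)))) = {}"
      using wires_tree_gates[of l] disj by blast
    with False Node.IH(2)[OF \<open>distinct (leaves r)\<close>] show ?thesis
      by (simp add: run_commute_disjoint)
  qed
qed simp

text \<open>A group \<open>(l, M)\<close> consists of a leader \<open>l\<close> and the members \<open>M\<close> it collects.\<close>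

fun group_gates :: "(nat \<times> nat list) list \<Rightarrow> gate list" where
  "group_gates [] = []"
| "group_gates ((l, M) # G) =
     fan_in_gates l M @ (case G of [] \<Rightarrow> [] | (l', M') # _ \<Rightarrow> (l, l') # group_gates G)"

lemma group_gates_snoc_leader: "group_gates (G @ [(l, M), (x, [])]) = group_gates (G @ [(l, M)]) @ [(l, x)]"
proof (induction G rule: group_gates.induct)
  case (2 l' M' G)
  then show ?case by (cases G) (auto simp: fan_in_gates_def)
qed (simp add: fan_in_gates_def)

lemma group_gates_snoc_member: "group_gates (G @ [(l, M @ [x])]) = group_gates (G @ [(l, M)]) @ [(x, l)]"
proof (induction G rule: group_gates.induct)
  case (2 l' M' G)
  then show ?case by (cases G) (auto simp: fan_in_gates_def)
qed (simp add: fan_in_gates_def)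

definition group_qubits :: "(nat \<times> nat list) list \<Rightarrow> nat list" where
  "group_qubits G = concat (map (\<lambda>(l, M). l # M) G)"

lemma group_qubits_Nil [simp]: "group_qubits [] = []"
  and group_qubits_Cons [simp]: "group_qubits ((l, M) # G) = l # M @ group_qubits G"
  and group_qubits_append [simp]: "group_qubits (G @ H) = group_qubits G @ group_qubits H"
  by (simp_all add: group_qubits_def)

lemma group_qubits_mem: "(l, M) \<in> set G \<Longrightarrow> l \<in> set (group_qubits G) \<and> set M \<subseteq> set (group_qubits G)"
  by (induction G) auto

definition member_gates :: "(nat \<times> nat list) list \<Rightarrow> gate list" where
  "member_gates G = concat (map (\<lambda>(l, M). fan_in_gates l M) G)"

lemma member_gates_Nil [simp]: "member_gates [] = []"
  and member_gates_Cons [simp]: "member_gates ((l, M) # G) = fan_in_gates l M @ member_gates G"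
  by (simp_all add: member_gates_def)

lemma member_gates_memD: "(c, e) \<in> set (member_gates G) \<Longrightarrow> \<exists>M. (e, M) \<in> set G \<and> c \<in> set M"
  by (auto simp: member_gates_def fan_in_gates_def)

text \<open>All fan-ins can be performed before the chain of leaders, since the chain gate from a
  leader to the next one neither targets a leader of a later group nor reads a member of one.\<close>

lemma run_group_gates:
  fixes s :: "nat \<Rightarrow> 'a::ab_group_add"
  assumes "distinct (group_qubits G)"
  shows "run (group_gates G) s = run (chain_gates (map fst G)) (run (member_gates G) s)"
  using assms
proof (induction G arbitrary: s rule: group_gates.induct)
  case (2 l M G)
  show ?case
  proof (cases G)
    case (Cons g G')
    obtain l' M' where g: "g = (l', M')" by fastforce
    have dist: "distinct (l # M @ l' # M' @ group_qubits G')"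
      using "2.prems" Cons g by simp
    have "l \<noteq> e \<and> c \<noteq> l'" if ce: "(c, e) \<in> set (member_gates G)" for c e
    proof -
      obtain N where "(e, N) \<in> set G" "c \<in> set N"
        using member_gates_memD[OF ce] by blast
      then have "e \<in> set (group_qubits G)" "c \<in> set M' \<or> c \<in> set (group_qubits G')"
        using Cons g group_qubits_mem by fastforce+
      with dist show ?thesis
        using Cons g by auto
    qed
    then have commute: "run (member_gates G) (cnot (l, l') s') = cnot (l, l') (run (member_gates G) s')"
      for s' :: "nat \<Rightarrow> 'a"
      by (intro run_commute_cnot) auto
    have "distinct (group_qubits G)"
      using "2.prems" by simp
    have "run (group_gates ((l, M) # G)) s = run (group_gates G) (cnot (l, l') (run (fan_in_gates l M) s))"
      using Cons g by simp
    also have "\<dots> = run (chain_gates (map fst G)) (run (member_gates G) (cnot (l, l') (run (fan_in_gates l M) s)))"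
      by (rule "2.IH"[OF Cons g[symmetric]]) fact
    also have "run (member_gates G) (cnot (l, l') (run (fan_in_gates l M) s))
        = cnot (l, l') (run (member_gates G) (run (fan_in_gates l M) s))"
      by (rule commute)
    finally show ?thesis
      using Cons g by simp
  qed simp
qed simp

text \<open>The spine gates as groups: a gate from a light child onto the spine qubit makes the light
  child's qubit a member of the current group; a gate from the spine qubit onto the light child's
  qubit moves the spine to that qubit and opens a new group.\<close>

fun spine_groups :: "ctree \<Rightarrow> (nat \<times> nat list) list" where
  "spine_groups (Leaf a) = [(a, [])]"
| "spine_groups (Node d l r) =
     (if nleaves r \<le> nleaves l then
        (if d = L then butlast (spine_groups l) @ [(qidx l, snd (last (spine_groups l)) @ [qidx r])]
         else spine_groups l @ [(qidx r, [])])
      else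
        (if d = R then butlast (spine_groups r) @ [(qidx r, snd (last (spine_groups r)) @ [qidx l])]
         else spine_groups r @ [(qidx l, [])]))"

lemma spine_groups_snoc: "\<exists>G M. spine_groups T = G @ [(qidx T, M)]"
proof (induction T)
  case (Node d l r)
  then show ?case by (cases d) auto
qed simp

lemma spine_gates_eq_group_gates: "spine_gates T = group_gates (spine_groups T)"
proof (induction T)
  case (Leaf a)
  then show ?case by (simp add: fan_in_gates_def)
next
  case (Node d l r)
  obtain G M where l: "spine_groups l = G @ [(qidx l, M)]"
    using spine_groups_snoc by blast
  obtain G' M' where r: "spine_groups r = G' @ [(qidx r, M')]"
    using spine_groups_snoc by blast
  show ?case
    using Node l r group_gates_snoc_leader group_gates_snoc_member
    by (cases d) (auto simp: root_gate_def)
qed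

lemma mset_group_qubits_spine_groups:
  "mset (group_qubits (spine_groups T)) = mset (spine_leaf T # map qidx (light_subtrees T))"
proof (induction T)
  case (Node d l r)
  obtain G M where "spine_groups l = G @ [(qidx l, M)]"
    using spine_groups_snoc by blast
  moreover obtain G' M' where "spine_groups r = G' @ [(qidx r, M')]"
    using spine_groups_snoc by blast
  ultimately show ?case
    using Node by (cases d) auto
qed simp

lemma set_map_qidx: "set (map qidx Ss) \<subseteq> set (concat (map leaves Ss))"
  by (induction Ss) (use qidx_in_leaves in auto)

lemma distinct_map_qidx: "distinct (concat (map leaves Ss)) \<Longrightarrow> distinct (map qidx Ss)"
proof (induction Ss)
  case (Cons S Ss)
  have "qidx S \<notin> set (map qidx Ss)"
  proof
    assume "qidx S \<in> set (map qidx Ss)"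
    then have "qidx S \<in> set (concat (map leaves Ss))"
      using set_map_qidx by blast
    then show False
      using Cons.prems qidx_in_leaves[of S] by auto
  qed
  with Cons show ?case
    by simp
qed simp

lemma length_le_length_concat_leaves: "length Ss \<le> length (concat (map leaves Ss))"
proof (induction Ss)
  case (Cons S Ss)
  then show ?case
    using leaves_nonempty[of S] by (cases "leaves S") auto
qed simp

lemma set_group_qubits_spine_groups: "set (group_qubits (spine_groups T)) \<subseteq> set (leaves T)"
proof -
  have "set (group_qubits (spine_groups T)) = set (spine_leaf T # map qidx (light_subtrees T))"
    by (rule mset_eq_setD[OF mset_group_qubits_spine_groups])
  also have "\<dots> \<subseteq> set (spine_leaf T # concat (map leaves (light_subtrees T)))"
    using set_map_qidx by auto
  also have "\<dots> = set (leaves T)"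
    by (rule mset_eq_setD[OF mset_leaves_spine, symmetric])
  finally show ?thesis .
qed

lemma distinct_group_qubits_spine_groups:
  assumes "distinct (leaves T)"
  shows "distinct (group_qubits (spine_groups T))"
proof -
  have "distinct (spine_leaf T # concat (map leaves (light_subtrees T)))"
    using distinct_leaves_light_subtrees[OF assms] .
  then have "distinct (spine_leaf T # map qidx (light_subtrees T))"
    using distinct_map_qidx set_map_qidx by (auto simp del: set_concat)
  then show ?thesis
    by (simp add: mset_eq_imp_distinct_iff[OF mset_group_qubits_spine_groups])
qed

lemma length_group_qubits_spine_groups: "length (group_qubits (spine_groups T)) \<le> nleaves T"
proof -
  have "length (group_qubits (spine_groups T)) = Suc (length (light_subtrees T))"
    using arg_cong[OF mset_group_qubits_spine_groups[of T], of size] by simp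
  also have "\<dots> \<le> Suc (length (concat (map leaves (light_subtrees T))))"
    using length_le_length_concat_leaves by simp
  also have "\<dots> = nleaves T"
    using arg_cong[OF mset_leaves_spine[of T], of size] by (simp add: nleaves_def)
  finally show ?thesis .
qed

definition spine_circuit :: "(nat \<times> nat list) list \<Rightarrow> gate list list" where
  "spine_circuit G =
     parallel (map (\<lambda>(l, M). fan_in_circuit l ((!) M) (length M)) G)
     @ prefix_circuit ((!) (map fst G)) (length G)"

lemma distinct_group: "distinct (group_qubits G) \<Longrightarrow> (l, M) \<in> set G \<Longrightarrow> distinct (l # M)"
  by (induction G) auto

lemma distinct_map_fst_groups: "distinct (group_qubits G) \<Longrightarrow> distinct (map fst G)"
proof (induction G)
  case (Cons g G)
  then show ?case
    by (cases g) (force dest: group_qubits_mem)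
qed simp

lemma wires_fan_in_circuit_nth:
  "set (wires (concat (fan_in_circuit l ((!) M) (length M)))) \<subseteq> set (l # M)"
  using wires_fan_in_circuit[of l "(!) M" "length M"] by (simp add: image_nth_lessThan)

lemma sorted_wrt_disjnt_fan_ins:
  assumes "distinct (group_qubits G)"
  shows "sorted_wrt disjnt
    (map (\<lambda>C. set (wires (concat C))) (map (\<lambda>(l, M). fan_in_circuit l ((!) M) (length M)) G))"
proof -
  have "sorted_wrt disjnt (map (\<lambda>(l, M). set (l # M)) G)"
    using sorted_wrt_disjnt_if_distinct_concat[of "\<lambda>(l, M). l # M" G] assms
    by (simp add: group_qubits_def case_prod_unfold)
  then show ?thesis
    unfolding map_map
    by (rule sorted_wrt_disjnt_mono[rotated]) (use wires_fan_in_circuit_nth in fastforce)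
qed

lemma run_spine_circuit:
  fixes s :: "nat \<Rightarrow> 'a::ab_group_add"
  assumes char2: "\<And>x::'a. x + x = 0" and "distinct (group_qubits G)"
  shows "run (concat (spine_circuit G)) s = run (group_gates G) s"
proof -
  have fan_ins: "run (concat (concat (map (\<lambda>(l, M). fan_in_circuit l ((!) M) (length M)) G))) u
      = run (member_gates G) u" for u :: "nat \<Rightarrow> 'a"
    using assms(2)
  proof (induction G arbitrary: u)
    case (Cons g G)
    then show ?case
      by (cases g) (simp add: run_fan_in_circuit_nth[OF char2])
  qed simp
  have "run (concat (spine_circuit G)) s
      = run (concat (prefix_circuit ((!) (map fst G)) (length G)))
          (run (concat (parallel (map (\<lambda>(l, M). fan_in_circuit l ((!) M) (length M)) G))) s)"
    by (simp add: spine_circuit_def)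
  also have "\<dots> = run (chain_gates (map fst G)) (run (member_gates G) s)"
    by (simp only: run_parallel[OF sorted_wrt_disjnt_fan_ins[OF assms(2)]] fan_ins
        run_prefix_circuit_nth[OF distinct_map_fst_groups[OF assms(2)], unfolded length_map])
  also have "\<dots> = run (group_gates G) s"
    by (rule run_group_gates[OF assms(2), symmetric])
  finally show ?thesis .
qed

lemma wires_spine_circuit: "set (wires (concat (spine_circuit G))) \<subseteq> set (group_qubits G)"
proof -
  have "set (wires (concat C)) \<subseteq> set (group_qubits G)"
    if C: "C \<in> set (map (\<lambda>(l, M). fan_in_circuit l ((!) M) (length M)) G)" for C
  proof -
    obtain l M where "(l, M) \<in> set G" "C = fan_in_circuit l ((!) M) (length M)"
      using C by auto
    then show ?thesis
      using wires_fan_in_circuit_nth[of l M] group_qubits_mem[of l M G] by auto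
  qed
  moreover have "set (wires (concat (prefix_circuit ((!) (map fst G)) (length G)))) \<subseteq> set (group_qubits G)"
    using wires_prefix_circuit[of "(!) (map fst G)" "length G"] image_nth_lessThan[of "map fst G"]
      group_qubits_mem by fastforce
  ultimately show ?thesis
    unfolding spine_circuit_def by (simp add: UN_subset_iff)
qed

lemma spine_circuit_layered:
  assumes "distinct (group_qubits G)"
  shows "layered (spine_circuit G)"
proof -
  have "layered (fan_in_circuit l ((!) M) (length M))" if "(l, M) \<in> set G" for l M
  proof -
    have "distinct (l # M)"
      by (rule distinct_group[OF assms that])
    then show ?thesis
      by (intro fan_in_circuit_layered) (auto intro: inj_on_nth simp: in_set_conv_nth)
  qed
  moreover have "layered (prefix_circuit ((!) (map fst G)) (length G))"
    using distinct_map_fst_groups[OF assms] by (intro prefix_circuit_layered inj_on_nth) auto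
  ultimately show ?thesis
    unfolding spine_circuit_def
    by (auto intro!: parallel_layered sorted_wrt_disjnt_fan_ins[OF assms])
qed

lemma length_spine_circuit:
  assumes "\<forall>(l, M)\<in>set G. length M \<le> N" "length G \<le> N"
  shows "length (spine_circuit G) \<le> 4 * ceillog2 N + 1"
proof -
  have "length (fan_in_circuit l ((!) M) (length M)) \<le> 2 * ceillog2 N + 1" if "(l, M) \<in> set G" for l M
    using length_fan_in_circuit[of l "(!) M" "length M"] ceillog2_mono[of "length M" N] assms(1) that
    by fastforce
  then have "length (parallel (map (\<lambda>(l, M). fan_in_circuit l ((!) M) (length M)) G)) \<le> 2 * ceillog2 N + 1"
    by (intro length_parallel) auto
  moreover have "length (prefix_circuit ((!) (map fst G)) (length G)) \<le> 2 * ceillog2 N"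
    using length_prefix_circuit[of "(!) (map fst G)" "length G"] ceillog2_mono[OF assms(2)] by linarith
  ultimately show ?thesis
    by (simp add: spine_circuit_def)
qed

lemma length_groups_le: "length G \<le> length (group_qubits G)"
  by (induction G) auto

lemma length_group_members_le: "(l, M) \<in> set G \<Longrightarrow> length M \<le> length (group_qubits G)"
  by (induction G) auto

section \<open>A layered circuit for a CNOT tree\<close>

lemma nleaves_light_subtree_less: "S \<in> set (light_subtrees T) \<Longrightarrow> nleaves S < nleaves T"
  using nleaves_light_subtree[of S T] nleaves_pos[of S] by linarith

lemma distinct_leaves_light_subtree:
  "distinct (leaves T) \<Longrightarrow> S \<in> set (light_subtrees T) \<Longrightarrow> distinct (leaves S)"
  using distinct_leaves_light_subtrees[of T] by (auto simp: distinct_concat_iff)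

lemma sorted_wrt_disjnt_light_subtrees:
  assumes "distinct (leaves T)" "\<forall>S\<in>set (light_subtrees T). set (wires (concat (f S))) \<subseteq> set (leaves S)"
  shows "sorted_wrt disjnt (map (\<lambda>C. set (wires (concat C))) (map f (light_subtrees T)))"
proof -
  have "sorted_wrt disjnt (map (\<lambda>S. set (leaves S)) (light_subtrees T))"
    using distinct_leaves_light_subtrees[OF assms(1)]
    by (intro sorted_wrt_disjnt_if_distinct_concat) simp
  then show ?thesis
    unfolding map_map by (rule sorted_wrt_disjnt_mono[rotated]) (use assms(2) in simp)
qed

function tree_circuit :: "ctree \<Rightarrow> gate list list" where
  "tree_circuit T = parallel (map tree_circuit (light_subtrees T)) @ spine_circuit (spine_groups T)"
  by pat_completeness auto
termination by (relation "measure nleaves") (auto simp: nleaves_light_subtree_less)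

declare tree_circuit.simps [simp del]

lemma wires_tree_circuit: "set (wires (concat (tree_circuit T))) \<subseteq> set (leaves T)"
proof (induction T rule: tree_circuit.induct)
  case (1 T)
  have "set (wires (concat (tree_circuit S))) \<subseteq> set (leaves T)" if "S \<in> set (light_subtrees T)" for S
    using "1.IH"[OF that] leaves_light_subtree[OF that] by blast
  then show ?case
    using wires_spine_circuit set_group_qubits_spine_groups
    by (subst tree_circuit.simps) (fastforce simp: UN_subset_iff)
qed

lemma tree_circuit_layered: "distinct (leaves T) \<Longrightarrow> layered (tree_circuit T)"
proof (induction T rule: tree_circuit.induct)
  case (1 T)
  have "layered (parallel (map tree_circuit (light_subtrees T)))"
    using "1.IH" distinct_leaves_light_subtree[OF "1.prems"]
    by (intro parallel_layered sorted_wrt_disjnt_light_subtrees[OF "1.prems"]) (auto simp: wires_tree_circuit)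
  moreover have "layered (spine_circuit (spine_groups T))"
    by (intro spine_circuit_layered distinct_group_qubits_spine_groups "1.prems")
  ultimately show ?case
    by (subst tree_circuit.simps) simp
qed

lemma run_tree_circuit:
  fixes s :: "nat \<Rightarrow> 'a::ab_group_add"
  assumes char2: "\<And>x::'a. x + x = 0"
  shows "distinct (leaves T) \<Longrightarrow> run (concat (tree_circuit T)) s = run (tree_gates T) s"
proof (induction T arbitrary: s rule: tree_circuit.induct)
  case (1 T)
  have disj: "sorted_wrt disjnt (map (\<lambda>C. set (wires (concat C))) (map tree_circuit (light_subtrees T)))"
    by (intro sorted_wrt_disjnt_light_subtrees "1.prems" ballI wires_tree_circuit)
  have "run (concat (tree_circuit T)) s
      = run (concat (spine_circuit (spine_groups T))) (run (concat (parallel (map tree_circuit (light_subtrees T)))) s)"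
    by (subst tree_circuit.simps) simp
  also have "\<dots> = run (spine_gates T) (run (concat (map tree_gates (light_subtrees T))) s)"
    using "1.IH" distinct_leaves_light_subtree[OF "1.prems"]
    by (simp add: run_parallel[OF disj] run_concat_map_cong spine_gates_eq_group_gates
        run_spine_circuit[OF char2 distinct_group_qubits_spine_groups[OF "1.prems"]])
  also have "\<dots> = run (tree_gates T) s"
    by (rule run_tree_gates_spine[OF "1.prems", symmetric])
  finally show ?case .
qed

lemma ceillog2_nleaves_light_subtree_less:
  assumes "S \<in> set (light_subtrees T)"
  shows "ceillog2 (nleaves S) < ceillog2 (nleaves T)"
proof -
  have "2 * nleaves S \<le> nleaves T" "nleaves S > 0"
    using nleaves_light_subtree[OF assms] nleaves_pos by auto
  then have "\<not> nleaves T \<le> 1" "nleaves S \<le> (nleaves T + 1) div 2"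
    by linarith+
  then show ?thesis
    using ceillog2_mono ceillog2_rec[of "nleaves T"] by (metis le_imp_less_Suc plus_1_eq_Suc)
qed

lemma length_tree_circuit: "length (tree_circuit T) \<le> ceillog2 (nleaves T) * (4 * ceillog2 (nleaves T) + 1)"
proof (induction T rule: tree_circuit.induct)
  case (1 T)
  define c where "c = ceillog2 (nleaves T)"
  show ?case
  proof (cases T)
    case (Leaf a)
    then show ?thesis
      by (simp add: tree_circuit.simps spine_circuit_def fan_in_circuit.simps prefix_circuit.simps)
  next
    case (Node d l r)
    have "length (tree_circuit S) \<le> (c - 1) * (4 * (c - 1) + 1)" if "S \<in> set (light_subtrees T)" for S
    proof -
      have "ceillog2 (nleaves S) \<le> c - 1"
        using ceillog2_nleaves_light_subtree_less[OF that] by (simp add: c_def)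
      then show ?thesis
        using "1.IH"[OF that] by (meson add_le_mono le_refl mult_le_mono order.trans)
    qed
    then have "length (parallel (map tree_circuit (light_subtrees T))) \<le> (c - 1) * (4 * (c - 1) + 1)"
      by (intro length_parallel) auto
    moreover have "length (spine_circuit (spine_groups T)) \<le> 4 * c + 1"
      unfolding c_def using length_group_qubits_spine_groups[of T]
      by (intro length_spine_circuit) (auto dest: length_group_members_le intro: order.trans length_groups_le)
    ultimately have "length (tree_circuit T) \<le> (c - 1) * (4 * (c - 1) + 1) + (4 * c + 1)"
      by (subst tree_circuit.simps) simp
    also have "\<dots> \<le> c * (4 * c + 1)"
    proof -
      obtain S where "S \<in> set (light_subtrees T)"
        using Node by (cases "nleaves r \<le> nleaves l") auto
      then obtain c' where "c = Suc c'"
        using ceillog2_nleaves_light_subtree_less unfolding c_def by (metis less_imp_Suc_add)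
      then show ?thesis
        by (simp add: algebra_simps)
    qed
    finally show ?thesis
      unfolding c_def .
  qed
qed

section \<open>Matrices\<close>

definition layer_mat :: "nat \<Rightarrow> gate list \<Rightarrow> bit mat" where
  "layer_mat n K = foldr (\<lambda>(i, j) A. A + E1 n j i) K (1\<^sub>m n)"

lemma layer_mat_carrier [simp]: "layer_mat n K \<in> carrier_mat n n"
  by (induction K) (auto simp: layer_mat_def E1_def)

lemma E1_carrier [simp]: "E1 n j i \<in> carrier_mat n n"
  by (simp add: E1_def)

lemma E1_mult_vec:
  assumes "i < n"
  shows "E1 n j i *\<^sub>v vec n s = vec n (\<lambda>q. if q = j then s i else 0)"
proof (rule eq_vecI)
  fix q
  assume "q < dim_vec (vec n (\<lambda>q. if q = j then s i else 0))"
  then have "(E1 n j i *\<^sub>v vec n s) $ q = (\<Sum>k\<in>{0..<n}. (if q = j \<and> k = i then 1 else 0) * s k)"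
    by (simp add: E1_def scalar_prod_def)
  also have "\<dots> = (\<Sum>k\<in>{0..<n}. if k = i then (if q = j then s i else 0) else 0)"
    by (rule sum.cong) auto
  also have "\<dots> = vec n (\<lambda>q. if q = j then s i else 0) $ q"
    using assms \<open>q < dim_vec _\<close> by simp
  finally show "(E1 n j i *\<^sub>v vec n s) $ q = vec n (\<lambda>q. if q = j then s i else 0) $ q" .
qed (simp add: E1_def)

lemma layer_mat_mult_vec:
  assumes "\<forall>(i, j)\<in>set K. i < n"
  shows "layer_mat n K *\<^sub>v vec n s = vec n (\<lambda>q. s q + (\<Sum>(i, j)\<leftarrow>K. if j = q then s i else 0))"
  using assms
proof (induction K)
  case Nil
  show ?case
    by (auto simp: layer_mat_def)
next
  case (Cons g K)
  obtain i j where g: "g = (i, j)" by fastforce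
  have i: "i < n"
    using Cons.prems g by simp
  have IH: "layer_mat n K *\<^sub>v vec n s = vec n (\<lambda>q. s q + (\<Sum>(i, j)\<leftarrow>K. if j = q then s i else 0))"
    by (rule Cons.IH) (use Cons.prems in simp)
  have "layer_mat n (g # K) = layer_mat n K + E1 n j i"
    by (simp add: g layer_mat_def)
  then have "layer_mat n (g # K) *\<^sub>v vec n s = layer_mat n K *\<^sub>v vec n s + E1 n j i *\<^sub>v vec n s"
    by (simp add: add_mult_distrib_mat_vec[OF layer_mat_carrier E1_carrier])
  also have "\<dots> = vec n (\<lambda>q. s q + (\<Sum>(i, j)\<leftarrow>K. if j = q then s i else 0)) + vec n (\<lambda>q. if q = j then s i else 0)"
    by (simp only: IH E1_mult_vec[OF i])
  also have "\<dots> = vec n (\<lambda>q. s q + (\<Sum>(i, j)\<leftarrow>g # K. if j = q then s i else 0))"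
  proof (rule eq_vecI)
    fix q
    assume "q < dim_vec (vec n (\<lambda>q. s q + (\<Sum>(i, j)\<leftarrow>g # K. if j = q then s i else 0)))"
    then have "q < n" by simp
    then show "(vec n (\<lambda>q. s q + (\<Sum>(i, j)\<leftarrow>K. if j = q then s i else 0)) + vec n (\<lambda>q. if q = j then s i else 0)) $ q
        = vec n (\<lambda>q. s q + (\<Sum>(i, j)\<leftarrow>g # K. if j = q then s i else 0)) $ q"
      by (simp only: index_add_vec index_vec dim_vec g list.map sum_list.Cons prod.case add_ac eq_commute[of q j])
  qed simp
  finally show ?case .
qed

definition represents :: "nat \<Rightarrow> bit mat \<Rightarrow> gate list \<Rightarrow> bool" where
  "represents n A G \<longleftrightarrow> A \<in> carrier_mat n n \<and> (\<forall>s. A *\<^sub>v vec n s = vec n (run G s))"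

lemma represents_layer_mat:
  assumes "distinct (wires K)" "set (wires K) \<subseteq> {..<n}"
  shows "represents n (layer_mat n K) K"
proof -
  have "\<forall>(i, j)\<in>set K. i < n"
    using assms(2) by (auto dest: wires_memberD)
  moreover have "run K s = (\<lambda>q. s q + (\<Sum>(i, j)\<leftarrow>K. if j = q then s i else 0))" for s :: "nat \<Rightarrow> bit"
    using run_layer[OF assms(1)] by blast
  ultimately show ?thesis
    by (simp only: represents_def layer_mat_mult_vec layer_mat_carrier) simp
qed

lemma represents_mult: "represents n A G \<Longrightarrow> represents n B H \<Longrightarrow> represents n (A * B) (H @ G)"
  by (auto simp: represents_def)

lemma represents_mat_prod:
  "\<forall>x\<in>set xs. represents n (f x) (g x) \<Longrightarrow>
   represents n (mat_prod n (rev (map f xs))) (concat (map g xs))"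
proof (induction xs rule: rev_induct)
  case Nil
  then show ?case
    by (simp add: represents_def mat_prod_def)
next
  case (snoc x xs)
  then show ?case
    by (simp add: mat_prod_def represents_mult)
qed

lemma mat_eq_if_mult_vec_eq:
  fixes A B :: "'a::semiring_1 mat"
  assumes "A \<in> carrier_mat n n" "B \<in> carrier_mat n n" "\<And>s. A *\<^sub>v vec n s = B *\<^sub>v vec n s"
  shows "A = B"
proof (rule eq_matI)
  fix r c
  assume "r < dim_row B" "c < dim_col B"
  then have rc: "r < n" "c < n"
    using assms(2) by auto
  have "(unit_vec n c :: 'a vec) = vec n (\<lambda>i. if i = c then 1 else 0)"
    by (auto simp: unit_vec_def)
  then have "A *\<^sub>v unit_vec n c = B *\<^sub>v unit_vec n c"
    by (simp only: assms(3))
  then have "(A *\<^sub>v unit_vec n c) $ r = (B *\<^sub>v unit_vec n c) $ r"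
    by simp
  then show "A $$ (r, c) = B $$ (r, c)"
    using assms(1,2) rc by simp
qed (use assms in auto)

lemma represents_unique:
  assumes "represents n A G" "represents n B H" "run G = (run H :: (nat \<Rightarrow> bit) \<Rightarrow> _)"
  shows "A = B"
  using assms by (intro mat_eq_if_mult_vec_eq[of A n B]) (auto simp: represents_def)

lemma par_elim_layer_mat: "distinct (wires K) \<Longrightarrow> set (wires K) \<subseteq> {..<n} \<Longrightarrow> par_elim n (layer_mat n K)"
  unfolding par_elim_def layer_mat_def
  by (rule exI[of _ K]) (auto simp: wires_def dest: wires_memberD)

lemma node_mats_eq_layer_mats: "node_mats n T = map (\<lambda>g. layer_mat n [g]) (tree_gates T)"
proof (induction T)
  case (Node d l r)
  then show ?case
    by (cases d) (simp_all add: root_gate_def Rmat_def layer_mat_def)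
qed simp

lemma tree_gates_irrefl: "distinct (leaves T) \<Longrightarrow> (i, j) \<in> set (tree_gates T) \<Longrightarrow> i \<noteq> j"
proof (induction T)
  case (Node d l r)
  have "qidx l \<noteq> qidx r"
    using Node.prems(1) qidx_in_leaves[of l] qidx_in_leaves[of r] by auto
  with Node show ?case
    by (cases d) (auto simp: root_gate_def)
qed simp

lemma represents_tree_mat:
  assumes "distinct (leaves T)" "set (leaves T) \<subseteq> {..<n}"
  shows "represents n (tree_mat n T) (tree_gates T)"
proof -
  have "represents n (layer_mat n [g]) [g]" if "g \<in> set (tree_gates T)" for g
  proof -
    obtain i j where g: "g = (i, j)" by fastforce
    have "i \<noteq> j"
      using tree_gates_irrefl[OF assms(1)] that g by blast
    moreover have "{i, j} \<subseteq> {..<n}"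
      using wires_tree_gates[of T] wires_memberD[of i j "tree_gates T"] that g assms(2) by auto
    ultimately show ?thesis
      by (intro represents_layer_mat) (auto simp: g)
  qed
  then have "represents n (mat_prod n (rev (map (\<lambda>g. layer_mat n [g]) (tree_gates T))))
      (concat (map (\<lambda>g. [g]) (tree_gates T)))"
    by (intro represents_mat_prod) blast
  then show ?thesis
    by (simp add: tree_mat_def node_mats_eq_layer_mats)
qed

lemma cnot_treeD:
  "cnot_tree n T \<Longrightarrow> distinct (leaves T) \<and> set (leaves T) \<subseteq> {..<n} \<and> nleaves T = n"
  by (auto simp: cnot_tree_def nleaves_def)

lemma layers_of_cnot_trees:
  assumes "\<forall>T\<in>set Ts. cnot_tree n T" "K \<in> set (concat (map tree_circuit Ts))"
  shows "distinct (wires K) \<and> set (wires K) \<subseteq> {..<n}"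
proof -
  obtain T where T: "T \<in> set Ts" "K \<in> set (tree_circuit T)"
    using assms(2) by auto
  then have "set (wires K) \<subseteq> set (wires (concat (tree_circuit T)))"
    by (auto simp: set_wires_concat)
  then show ?thesis
    using T assms(1) cnot_treeD tree_circuit_layered wires_tree_circuit[of T]
    by (fastforce simp: layered_def)
qed

lemma length_cnot_trees_circuit:
  assumes "\<forall>T\<in>set Ts. cnot_tree n T"
  shows "length (concat (map tree_circuit Ts)) \<le> length Ts * (ceillog2 n * (4 * ceillog2 n + 1))"
proof -
  have "length (concat (map tree_circuit Ts)) = (\<Sum>T\<leftarrow>Ts. length (tree_circuit T))"
    by (simp add: length_concat comp_def)
  also have "\<dots> \<le> (\<Sum>T\<leftarrow>Ts. ceillog2 n * (4 * ceillog2 n + 1))"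
    using assms length_tree_circuit cnot_treeD by (intro sum_list_mono) metis
  finally show ?thesis
    by (simp add: sum_list_triv)
qed

lemma parallelize_cnot_trees:
  assumes "\<forall>T\<in>set Ts. cnot_tree n T"
  shows "\<exists>Ps. (\<forall>P\<in>set Ps. par_elim n P) \<and>
    length Ps \<le> length Ts * (ceillog2 n * (4 * ceillog2 n + 1)) \<and>
    mat_prod n (rev (map (tree_mat n) Ts)) = mat_prod n Ps"
proof -
  define Ls where "Ls = concat (map tree_circuit Ts)"
  note layers = layers_of_cnot_trees[OF assms, folded Ls_def]
  have "represents n (mat_prod n (rev (map (tree_mat n) Ts))) (concat (map tree_gates Ts))"
    using assms cnot_treeD by (intro represents_mat_prod ballI represents_tree_mat) auto
  moreover have "\<forall>K\<in>set Ls. represents n (layer_mat n K) K"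
    using layers by (auto intro: represents_layer_mat)
  then have "represents n (mat_prod n (rev (map (layer_mat n) Ls))) (concat Ls)"
    using represents_mat_prod[of Ls n "layer_mat n" "\<lambda>K. K"] by simp
  moreover have "run (concat Ls) u = run (concat (map tree_gates Ts)) u" for u :: "nat \<Rightarrow> bit"
    unfolding Ls_def using assms cnot_treeD by (intro run_concat_map_cong run_tree_circuit) auto
  then have "run (concat (map tree_gates Ts)) = (run (concat Ls) :: (nat \<Rightarrow> bit) \<Rightarrow> _)"
    by auto
  ultimately have "mat_prod n (rev (map (tree_mat n) Ts)) = mat_prod n (rev (map (layer_mat n) Ls))"
    by (rule represents_unique)
  then show ?thesis
    using layers length_cnot_trees_circuit[OF assms, folded Ls_def]
    by (intro exI[of _ "rev (map (layer_mat n) Ls)"]) (auto intro: par_elim_layer_mat)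
qed

lemma ceillog2_depth_le_log_squared:
  assumes "n \<ge> 2"
  shows "real (ceillog2 n * (4 * ceillog2 n + 1)) \<le> 20 * (log 2 (real n))\<^sup>2"
proof -
  define c where "c = ceillog2 n"
  have "1 \<le> log 2 (real n)"
    using assms by simp
  moreover have "real c < log 2 (real n) + 1"
    unfolding c_def using assms by (intro ceillog2_less_log) simp
  ultimately have "real c \<le> 2 * log 2 (real n)"
    by linarith
  have "c * (4 * c + 1) \<le> 5 * c\<^sup>2"
    by (simp add: power2_eq_square algebra_simps le_square)
  then have "real (c * (4 * c + 1)) \<le> 5 * (real c)\<^sup>2"
    by (metis of_nat_le_iff of_nat_mult of_nat_numeral of_nat_power)
  also have "\<dots> \<le> 5 * (2 * log 2 (real n))\<^sup>2"
    using \<open>real c \<le> 2 * log 2 (real n)\<close> by (intro mult_left_mono power_mono) auto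
  also have "\<dots> = 20 * (log 2 (real n))\<^sup>2"
    by (simp add: power_mult_distrib)
  finally show ?thesis
    by (simp only: c_def)
qed

theorem corollary3p6:
  shows "\<exists>C::real. C > 0 \<and>
    (\<forall>n k (Ts :: ctree list) (M :: bit mat). n \<ge> 2 \<and> k \<ge> 1 \<and> length Ts = k \<and>
       (\<forall>T\<in>set Ts. cnot_tree n T) \<and>
       M = mat_prod n (rev (map (tree_mat n) Ts)) \<longrightarrow>
       (\<exists>Ps. (\<forall>P\<in>set Ps. par_elim n P) \<and>
             real (length Ps) \<le> C * real k * (log 2 (real n))^2 \<and>
             M = mat_prod n Ps))"
proof (intro exI[of _ 20] conjI allI impI)
  fix n k Ts M
  assume asm: "n \<ge> 2 \<and> k \<ge> 1 \<and> length Ts = k \<and> (\<forall>T\<in>set Ts. cnot_tree n T) \<and>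
    M = mat_prod n (rev (map (tree_mat n) Ts))"
  then obtain Ps where Ps: "\<forall>P\<in>set Ps. par_elim n P" "M = mat_prod n Ps"
    and length: "length Ps \<le> k * (ceillog2 n * (4 * ceillog2 n + 1))"
    using parallelize_cnot_trees by blast
  have "real (length Ps) \<le> real k * real (ceillog2 n * (4 * ceillog2 n + 1))"
    using length by (metis of_nat_le_iff of_nat_mult)
  also have "\<dots> \<le> real k * (20 * (log 2 (real n))\<^sup>2)"
    using asm ceillog2_depth_le_log_squared by (intro mult_left_mono) auto
  finally show "\<exists>Ps. (\<forall>P\<in>set Ps. par_elim n P) \<and>
      real (length Ps) \<le> 20 * real k * (log 2 (real n))^2 \<and> M = mat_prod n Ps"
    using Ps by (auto simp: mult_ac)
qed simp

end
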